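(* Let $T\in\mathfrak{sl}_3(\mathbb R)$, $\mathbf Q\in\mathbb R^3$, $\mathbf p\in(\mathbb R^3)^*$, and let $X^{\mathrm{roll}}$ be the vector field on $S^2\times S^3$ induced by $\rho(T,\mathbf Q,\mathbf p)$. Then $X^{\mathrm{roll}}$ descends to a vector field on $S^2\times\mathrm{SO}_3$ under the double cover $S^2\times S^3\to S^2\times\mathrm{SO}_3$, $(\mathbf v,q)\mapsto(\mathbf v,\mathbf x\mapsto q\mathbf x\bar q)$, if and only if $T^t=-T$ and $\mathbf Q=-\mathbf p$ (identifying $\mathbb R^3$ and $(\mathbb R^3)^*$ via the Euclidean inner product).
   Context: $\mathrm{Im}(\mathbb O)$ is the space of matrices $\begin{pmatrix}x&\mathbf A\\ \mathbf b&-x\end{pmatrix}$, $x\in\mathbb R$, $\mathbf A\in\mathbb R^3$ column, $\mathbf b\in(\mathbb R^3)^*$ row. Vector products: for $\mathbf A,\mathbf A'\in\mathbb R^3$, $\mathbf A\times\mathbf A'=\det(\mathbf A,\mathbf A',\cdot)\in(\mathbb R^3)^*$; for $\mathbf b,\mathbf b'\in(\mathbb R^3)^*$, $\mathbf b\times\mathbf b'=\det(\mathbf b,\mathbf b',\cdot)\in\mathbb R^3$. The linear map $\rho(T,\mathbf Q,\mathbf p)$ on $\mathrm{Im}(\mathbb O)$ is $\begin{pmatrix}x&\mathbf A\\ \mathbf b&-x\end{pmatrix}\mapsto\begin{pmatrix}\mathbf p\mathbf A+\mathbf b\mathbf Q&T\mathbf A-\mathbf p\times\mathbf b+2\mathbf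 Qx\\ \mathbf Q\times\mathbf A-\mathbf bT+2\mathbf px&-\mathbf p\mathbf A-\mathbf b\mathbf Q\end{pmatrix}$; viewed as a linear vector field, it is tangent to the null cone $C=\{-x^2+\mathbf b\mathbf A=0\}$ and commutes with scaling, so it descends to $\widetilde Q^{\mathrm{oct}}=(C\setminus0)/\mathbb R^+$. With $\mathbb R^3\cong\mathrm{Im}(\mathbb H)\cong(\mathbb R^3)^*$, the diffeomorphism $\Phi:S^2\times S^3\to\widetilde Q^{\mathrm{oct}}$ is $\Phi(\mathbf v,q)=\mathbb R^+\begin{pmatrix}\mathrm{Re}(\mathbf vq)&\mathbf v+\mathrm{Im}(\mathbf vq)\\ \mathbf v-\mathrm{Im}(\mathbf vq)&-\mathrm{Re}(\mathbf vq)\end{pmatrix}$, and $X^{\mathrm{roll}}$ is the pullback under $\Phi$ of the descended vector field. Descending means $X^{\mathrm{roll}}$ is invariant under $(\mathbf v,q)\mapsto(\mathbf v,-q)$. *)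

theory Defs
  imports "HOL-Analysis.Analysis"
begin

text \<open>Quaternions are modelled as pairs (real part, imaginary part in R^3);
  Im(H), R^3 and (R^3)^* are all identified with real^3 via the Euclidean
  inner product, so row vectors are also elements of real^3.\<close>

type_synonym quat = "real \<times> (real^3)"

definition qmult :: "quat \<Rightarrow> quat \<Rightarrow> quat" where
  "qmult q r = (fst q * fst r - snd q \<bullet> snd r,
                fst q *\<^sub>R snd r + fst r *\<^sub>R snd q + cross3 (snd q) (snd r))"

definition S2 :: "(real^3) set" where "S2 = {v. norm v = 1}"
definition S3 :: "quat set" where "S3 = {q. norm q = 1}"

text \<open>An element of Im(O), the matrix ((x, A), (b, -x)), is encoded as (x, A, b).\<close>
type_synonym imO = "real \<times> (real^3) \<times> (real^3)"

text \<open>Here p A and b Q are the pairings of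
  rows with columns, p x b = det(p,b,.) and Q x A = det(Q,A,.) are the cross
  products, and b T is the row vector times matrix product.\<close>
definition rho :: "real^3^3 \<Rightarrow> real^3 \<Rightarrow> real^3 \<Rightarrow> imO \<Rightarrow> imO" where
  "rho T Q p m = (case m of (x, A, b) \<Rightarrow>
     (p \<bullet> A + b \<bullet> Q,
      T *v A - cross3 p b + (2 * x) *\<^sub>R Q,
      cross3 Q A - b v* T + (2 * x) *\<^sub>R p))"

text \<open>The representative in the null cone of Phi(v,q) (before taking the R^+ ray).\<close>
definition Phi_rep :: "real^3 \<Rightarrow> quat \<Rightarrow> imO" where
  "Phi_rep v q = (let vq = qmult (0, v) q in (fst vq, v + snd vq, v - snd vq))"

text \<open>The pullback under Phi of the vector field induced by rho on the ray space
  (C minus 0)/R^+: the unique tangent vector (xi, eta) at (v,q) in S^2 x S^3 whose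
  image under dPhi is the class of rho(m) modulo the ray direction R m, where
  m = Phi_rep v q.\<close>
definition X_roll :: "real^3^3 \<Rightarrow> real^3 \<Rightarrow> real^3 \<Rightarrow> (real^3) \<times> quat \<Rightarrow> (real^3) \<times> quat" where
  "X_roll T Q p vq = (case vq of (v, q) \<Rightarrow>
     THE w. fst w \<bullet> v = 0 \<and> snd w \<bullet> q = 0 \<and>
       (\<exists>l::real. frechet_derivative (\<lambda>z. Phi_rep (fst z) (snd z)) (at (v, q)) w
                  = rho T Q p (Phi_rep v q) + l *\<^sub>R Phi_rep v q))"

text \<open>A vector field X on S^2 x S^3 descends to S^2 x SO(3) under the double cover
  (v,q) |-> (v, x |-> q x conj q) iff it is invariant under the deck transformation
  (v,q) |-> (v,-q), whose differential is (xi, eta) |-> (xi, -eta).\<close>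
definition descends_SO3 :: "((real^3) \<times> quat \<Rightarrow> (real^3) \<times> quat) \<Rightarrow> bool" where
  "descends_SO3 X \<longleftrightarrow> (\<forall>v \<in> S2. \<forall>q \<in> S3.
      X (v, -q) = (fst (X (v, q)), - snd (X (v, q))))"

end

theory Submission
  imports Defs
begin

text \<open>Under \<open>\<Phi>\<close> the deck transformation \<open>q \<mapsto> -q\<close> becomes the involution
  \<open>(x, A, b) \<mapsto> (-x, b, A)\<close> of \<open>Im(\<bbbO>)\<close>, and conjugating \<open>\<rho>(T, Q, p)\<close> by it gives
  \<open>\<rho>(-T\<^sup>t, -p, -Q)\<close>. Lifts through \<open>\<Phi>\<close> of vectors tangent to the cone are unique, so
  the rolling field descends iff the fields of \<open>(T, Q, p)\<close> and \<open>(-T\<^sup>t, -p, -Q)\<close> coincide.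
  At \<open>q = 1\<close> we have \<open>\<Phi>(v, 1) = (0, 2v, 0)\<close>, where the two values of \<open>\<rho>\<close> differ by
  \<open>((p + Q) v, (T + T\<^sup>t) v, (p + Q) \<times> v)\<close>; this must lie on the ray through \<open>(0, v, 0)\<close>.
  Hence \<open>p + Q \<bottom> v\<close> and \<open>v\<close> is an eigenvector of \<open>T + T\<^sup>t\<close> for every \<open>v\<close>, so
  \<open>p + Q = 0\<close> and \<open>T + T\<^sup>t\<close> is scalar, hence zero because it is traceless.\<close>

definition to_imO :: "real^3 \<Rightarrow> quat \<Rightarrow> imO" where
  "to_imO a z = (fst z, a + snd z, a - snd z)"

lemma to_imO_eq_iff: "to_imO a z = to_imO b y \<longleftrightarrow> a = b \<and> z = y"
  by (auto simp: to_imO_def prod_eq_iff vec_eq_iff) (smt (verit))+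

lemma to_imO_add: "to_imO a z + to_imO b y = to_imO (a + b) (z + y)"
  by (simp add: to_imO_def)

lemma to_imO_scaleR: "c *\<^sub>R to_imO a z = to_imO (c *\<^sub>R a) (c *\<^sub>R z)"
  by (simp add: to_imO_def scaleR_right_distrib scaleR_right_diff_distrib)

lemma to_imO_surj: "\<exists>a z. m = to_imO a z"
proof -
  obtain x A b where "m = (x, A, b)" by (cases m) auto
  then have "m = to_imO ((1/2) *\<^sub>R (A + b)) (x, (1/2) *\<^sub>R (A - b))"
    by (simp add: to_imO_def vec_eq_iff field_simps)
  then show ?thesis by blast
qed

lemma Phi_rep_to_imO: "Phi_rep v q = to_imO v (qmult (0, v) q)"
  by (simp add: Phi_rep_def to_imO_def Let_def)

lemmas qmult_coords =
  cross3_def inner_vec_def sum_3 vec_eq_iff forall_3 vector_3 inner_Pair prod_eq_iff qmult_def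

lemma qmult_imag_imag: "qmult (0, v) (qmult (0, v) y) = - (v \<bullet> v) *\<^sub>R y"
  by (cases y) (simp add: qmult_coords algebra_simps)

lemma inner_qmult_imag_left: "qmult (0, v) y \<bullet> z = - (y \<bullet> qmult (0, v) z)"
proof -
  obtain y0 y1 z0 z1 where yz: "y = (y0, y1)" "z = (z0, z1)" by (cases y, cases z)
  show ?thesis by (simp add: yz qmult_coords algebra_simps)
qed

lemma inner_qmult_imag_same_right: "qmult (0, a) q \<bullet> qmult (0, b) q = (a \<bullet> b) * (q \<bullet> q)"
proof -
  obtain q0 q1 where q: "q = (q0, q1)" by (cases q)
  show ?thesis by (simp add: q qmult_coords algebra_simps)
qed

lemma qmult_minus_right: "qmult y (- q) = - qmult y q"
  by (simp add: qmult_def algebra_simps cross_minus_right)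

lemma qmult_zero_left: "qmult 0 q = 0"
  by (simp add: qmult_def zero_prod_def)

definition dPhi :: "real^3 \<Rightarrow> quat \<Rightarrow> (real^3) \<times> quat \<Rightarrow> imO" where
  "dPhi v q w = to_imO (fst w) (qmult (0, fst w) q + qmult (0, v) (snd w))"

lemma has_derivative_Phi_rep:
  "((\<lambda>z. Phi_rep (fst z) (snd z)) has_derivative dPhi v q) (at (v, q))"
proof -
  have bilinear: "bounded_bilinear cross3"
    using bilinear_cross bilinear_conv_bounded_bilinear by blast
  have Phi_rep_coords: "(\<lambda>z. Phi_rep (fst z) (snd z)) = (\<lambda>z. (- (fst z \<bullet> snd (snd z)),
     fst z + (fst (snd z) *\<^sub>R fst z + cross3 (fst z) (snd (snd z))),
     fst z - (fst (snd z) *\<^sub>R fst z + cross3 (fst z) (snd (snd z)))))"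
    by (auto simp: fun_eq_iff Phi_rep_def qmult_def)
  show ?thesis
    unfolding Phi_rep_coords
    by (rule has_derivative_eq_rhs,
        (rule has_derivative_Pair has_derivative_add has_derivative_diff has_derivative_minus
          has_derivative_inner has_derivative_scaleR has_derivative_fst has_derivative_snd
          bounded_bilinear.FDERIV[OF bilinear] has_derivative_ident)+)
       (auto simp: fun_eq_iff algebra_simps dPhi_def to_imO_def qmult_def)
qed

lemma dPhi_diff: "dPhi v q (w - w') = dPhi v q w - dPhi v q w'"
  by (simp add: dPhi_def to_imO_def qmult_def algebra_simps Cross3.left_diff_distrib
      Cross3.right_diff_distrib)

text \<open>Twice the polar form of the quadratic form \<open>-x\<^sup>2 + b A\<close> cutting out the null cone \<open>C\<close>:
  \<open>r\<close> is tangent to \<open>C\<close> at \<open>m\<close> iff \<open>cone_polar m r = 0\<close>.\<close>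

definition cone_polar :: "imO \<Rightarrow> imO \<Rightarrow> real" where
  "cone_polar m r = - 2 * fst m * fst r + snd (snd m) \<bullet> fst (snd r) + snd (snd r) \<bullet> fst (snd m)"

lemma cone_polar_rho: "cone_polar m (rho T Q p m) = 0"
proof -
  obtain x A b where m: "m = (x, A, b)" by (cases m) auto
  show ?thesis
    by (simp add: m cone_polar_def rho_def inner_add_left inner_add_right inner_diff_left
        inner_diff_right dot_lmul_matrix dot_cross_self inner_commute[of A] algebra_simps)
qed

lemma cone_polar_to_imO: "cone_polar (to_imO v z) (to_imO a s) = 2 * (a \<bullet> v - z \<bullet> s)"
  by (simp add: cone_polar_def to_imO_def inner_prod_def inner_add_left inner_add_right
      inner_diff_left inner_diff_right inner_commute algebra_simps)

definition is_lift :: "imO \<Rightarrow> real^3 \<Rightarrow> quat \<Rightarrow> (real^3) \<times> quat \<Rightarrow> bool" where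
  "is_lift r v q w \<longleftrightarrow>
     fst w \<bullet> v = 0 \<and> snd w \<bullet> q = 0 \<and> (\<exists>l. dPhi v q w = r + l *\<^sub>R Phi_rep v q)"

lemma dPhi_eq_ray_imp_zero:
  assumes v: "v \<bullet> v = 1" and w: "fst w \<bullet> v = 0" and eq: "dPhi v q w = l *\<^sub>R Phi_rep v q"
  shows "w = 0"
proof -
  obtain \<xi> \<eta> where w_eq: "w = (\<xi>, \<eta>)" by (cases w)
  have "to_imO \<xi> (qmult (0, \<xi>) q + qmult (0, v) \<eta>) = to_imO (l *\<^sub>R v) (l *\<^sub>R qmult (0, v) q)"
    using eq by (simp add: w_eq dPhi_def Phi_rep_to_imO to_imO_scaleR)
  then have \<xi>: "\<xi> = l *\<^sub>R v" and z: "qmult (0, \<xi>) q + qmult (0, v) \<eta> = l *\<^sub>R qmult (0, v) q"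
    unfolding to_imO_eq_iff by blast+
  then have "l = 0" using w v by (simp add: w_eq)
  with \<xi> have "\<xi> = 0" by simp
  with z \<open>l = 0\<close> have "qmult (0, v) \<eta> = 0" by (simp add: qmult_zero_left zero_prod_def[symmetric])
  then have "qmult (0, v) (qmult (0, v) \<eta>) = 0" by (simp add: qmult_def zero_prod_def)
  then have "\<eta> = 0" using qmult_imag_imag[of v \<eta>] v by simp
  with \<open>\<xi> = 0\<close> show ?thesis by (simp add: w_eq zero_prod_def)
qed

lemma ex_lift:
  assumes v: "v \<bullet> v = 1" and q: "q \<bullet> q = 1" and tangent: "cone_polar (Phi_rep v q) r = 0"
  shows "\<exists>w. is_lift r v q w"
proof -
  obtain a s where r: "r = to_imO a s" using to_imO_surj by blast
  define vq where "vq = qmult (0, v) q"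
  define l where "l = - (a \<bullet> v)"
  define \<xi> where "\<xi> = a + l *\<^sub>R v"
  define y where "y = s + l *\<^sub>R vq - qmult (0, \<xi>) q"
  define \<eta> where "\<eta> = - qmult (0, v) y"
  \<comment> \<open>\<open>(0, v)\<close> squares to \<open>-1\<close>, so \<open>qmult (0, v) \<eta> = y\<close>; the tangency of \<open>r\<close> is exactly \<open>\<eta> \<bottom> q\<close>.\<close>
  have \<xi>v: "\<xi> \<bullet> v = 0" by (simp add: \<xi>_def l_def inner_add_left inner_diff_left v)
  have v\<eta>: "qmult (0, v) \<eta> = y"
    using qmult_imag_imag[of v y] v by (simp add: \<eta>_def qmult_minus_right)
  have "dPhi v q (\<xi>, \<eta>) = to_imO (a + l *\<^sub>R v) (s + l *\<^sub>R vq)"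
    by (simp add: dPhi_def v\<eta> y_def \<xi>_def)
  also have "\<dots> = r + l *\<^sub>R Phi_rep v q"
    by (simp add: r Phi_rep_to_imO vq_def to_imO_scaleR to_imO_add)
  finally have dPhi_eq: "dPhi v q (\<xi>, \<eta>) = r + l *\<^sub>R Phi_rep v q" .
  have "\<eta> \<bullet> q = y \<bullet> vq"
    by (simp add: \<eta>_def vq_def inner_qmult_imag_left)
  also have "\<dots> = s \<bullet> vq + l * (v \<bullet> v) * (q \<bullet> q) - (\<xi> \<bullet> v) * (q \<bullet> q)"
    by (simp add: y_def vq_def inner_add_left inner_diff_left inner_qmult_imag_same_right)
  also have "\<dots> = 0"
    using tangent v q \<xi>v
    by (simp add: r Phi_rep_to_imO cone_polar_to_imO l_def vq_def inner_commute)
  finally have "\<eta> \<bullet> q = 0" .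
  with \<xi>v dPhi_eq show ?thesis
    unfolding is_lift_def by (intro exI[of _ "(\<xi>, \<eta>)"]) auto
qed

lemma ex1_lift:
  assumes v: "v \<bullet> v = 1" and q: "q \<bullet> q = 1" and tangent: "cone_polar (Phi_rep v q) r = 0"
  shows "\<exists>!w. is_lift r v q w"
proof (rule ex_ex1I)
  show "\<exists>w. is_lift r v q w" using ex_lift[OF assms] .
next
  fix w w' assume "is_lift r v q w" "is_lift r v q w'"
  then obtain l l' where "dPhi v q w = r + l *\<^sub>R Phi_rep v q" "dPhi v q w' = r + l' *\<^sub>R Phi_rep v q"
    and "fst (w - w') \<bullet> v = 0"
    unfolding is_lift_def by (auto simp: inner_diff_left)
  then have "dPhi v q (w - w') = (l - l') *\<^sub>R Phi_rep v q"
    by (simp add: dPhi_diff algebra_simps)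
  then have "w - w' = 0"
    using dPhi_eq_ray_imp_zero[OF v \<open>fst (w - w') \<bullet> v = 0\<close>] by blast
  then show "w = w'" by simp
qed

lemma X_roll_eq_The_lift:
  "X_roll T Q p (v, q) = (THE w. is_lift (rho T Q p (Phi_rep v q)) v q w)"
  unfolding X_roll_def is_lift_def
  using frechet_derivative_at[OF has_derivative_Phi_rep, of v q] by simp

lemma is_lift_X_roll:
  assumes "v \<bullet> v = 1" "q \<bullet> q = 1"
  shows "is_lift (rho T Q p (Phi_rep v q)) v q (X_roll T Q p (v, q))"
  unfolding X_roll_eq_The_lift by (rule theI') (rule ex1_lift[OF assms cone_polar_rho])

lemma X_roll_eqI:
  assumes "v \<bullet> v = 1" "q \<bullet> q = 1" and "is_lift (rho T Q p (Phi_rep v q)) v q w"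
  shows "X_roll T Q p (v, q) = w"
  unfolding X_roll_eq_The_lift by (rule the1_equality[OF ex1_lift[OF assms(1,2) cone_polar_rho] assms(3)])

definition deck :: "imO \<Rightarrow> imO" where
  "deck m = (- fst m, snd (snd m), fst (snd m))"

lemma deck_to_imO: "deck (to_imO a z) = to_imO a (- z)"
  by (simp add: deck_def to_imO_def)

lemma deck_add_scaleR: "deck (m + c *\<^sub>R m') = deck m + c *\<^sub>R deck m'"
  by (simp add: deck_def)

lemma deck_eq_iff: "deck m = deck m' \<longleftrightarrow> m = m'"
  by (auto simp: deck_def prod_eq_iff)

lemma Phi_rep_uminus: "Phi_rep v (- q) = deck (Phi_rep v q)"
  by (simp add: Phi_rep_to_imO deck_to_imO qmult_minus_right)

lemma dPhi_uminus: "dPhi v (- q) (\<xi>, - \<eta>) = deck (dPhi v q (\<xi>, \<eta>))"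
  by (simp add: dPhi_def deck_to_imO qmult_minus_right)

lemma rho_deck: "rho T Q p (deck m) = deck (rho (- transpose T) (- p) (- Q) m)"
proof -
  obtain x A b where m: "m = (x, A, b)" by (cases m) auto
  show ?thesis
    by (simp add: m deck_def rho_def inner_commute algebra_simps vector_matrix_mult_def
        matrix_vector_mult_def transpose_def cross_skew[of p] cross_skew[of Q] vec_eq_iff sum_negf)
qed

lemma is_lift_uminus:
  "is_lift (rho T Q p (Phi_rep v (- q))) v (- q) (\<xi>, - \<eta>) \<longleftrightarrow>
   is_lift (rho (- transpose T) (- p) (- Q) (Phi_rep v q)) v q (\<xi>, \<eta>)"
  unfolding is_lift_def Phi_rep_uminus dPhi_uminus rho_deck deck_add_scaleR[symmetric] deck_eq_iff
  by simp

lemma X_roll_uminus: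
  assumes v: "v \<bullet> v = 1" and q: "q \<bullet> q = 1"
  shows "X_roll T Q p (v, - q) =
    (fst (X_roll (- transpose T) (- p) (- Q) (v, q)), - snd (X_roll (- transpose T) (- p) (- Q) (v, q)))"
proof (rule X_roll_eqI)
  show "(- q) \<bullet> (- q) = 1" using q by simp
  show "is_lift (rho T Q p (Phi_rep v (- q))) v (- q)
      (fst (X_roll (- transpose T) (- p) (- Q) (v, q)), - snd (X_roll (- transpose T) (- p) (- Q) (v, q)))"
    unfolding is_lift_uminus using is_lift_X_roll[OF v q] by simp
qed (rule v)

lemma S2_inner_self: "v \<in> S2 \<Longrightarrow> v \<bullet> v = 1"
  by (simp add: S2_def power2_norm_eq_inner[symmetric])

lemma S3_inner_self: "q \<in> S3 \<Longrightarrow> q \<bullet> q = 1"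
  by (simp add: S3_def power2_norm_eq_inner[symmetric])

lemma descends_SO3_X_roll_iff:
  "descends_SO3 (X_roll T Q p) \<longleftrightarrow>
     (\<forall>v \<in> S2. \<forall>q \<in> S3. X_roll (- transpose T) (- p) (- Q) (v, q) = X_roll T Q p (v, q))"
  unfolding descends_SO3_def
  by (simp add: X_roll_uminus S2_inner_self S3_inner_self prod_eq_iff)

lemma scalar_matrix_if_all_eigenvectors:
  fixes A :: "real^'n^'n"
  assumes eigen: "\<And>x. \<exists>c. A *v x = c *\<^sub>R x"
  shows "\<exists>c. A = mat c"
proof -
  have "\<forall>j. \<exists>c. column j A = c *\<^sub>R axis j 1"
    using eigen by (metis matrix_vector_mult_basis)
  then obtain d where d: "\<And>j. column j A = d j *\<^sub>R axis j 1"
    by metis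
  have d_eq: "d i = d j" for i j
  proof (cases "i = j")
    case False
    obtain c where "A *v (axis i 1 + axis j 1) = c *\<^sub>R (axis i 1 + axis j 1)"
      using eigen by blast
    then have "d i *\<^sub>R axis i 1 + d j *\<^sub>R axis j 1 = c *\<^sub>R axis i 1 + c *\<^sub>R axis j (1::real)"
      by (simp add: matrix_vector_right_distrib matrix_vector_mult_basis d scaleR_right_distrib)
    from arg_cong[OF this, of "\<lambda>x. x $ i"] arg_cong[OF this, of "\<lambda>x. x $ j"] False
    show ?thesis by (simp add: axis_def)
  qed simp
  have "A $ k $ j = mat (d i) $ k $ j" for i k j
    using arg_cong[OF d[of j], of "\<lambda>x. x $ k"] d_eq[of j i] by (simp add: column_def axis_def mat_def)
  then show ?thesis by (metis vec_eq_iff)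
qed

lemma trace_mat: "trace (mat c :: 'a::semiring_1^'n^'n) = of_nat CARD('n) * c"
  by (simp add: trace_def mat_def)

lemma trace_transpose: "trace (transpose A) = trace A"
  by (simp add: trace_def transpose_def)

lemma matrix_vector_mult_uminus: "(- A) *v x = - (A *v x)" for A :: "'a::ring_1^'n^'m"
  by (simp add: vec_eq_iff matrix_vector_mult_def sum_negf)

lemma Phi_rep_one: "Phi_rep v (1, 0) = (0, 2 *\<^sub>R v, 0)"
  by (simp add: Phi_rep_def qmult_def scaleR_2)

lemma rho_pure_column: "rho T Q p (0, A, 0) = (p \<bullet> A, T *v A, cross3 Q A)"
  by (simp add: rho_def)

lemma eigenvector_if_X_roll_conj_eq:
  assumes conj_eq: "\<And>v. v \<in> S2 \<Longrightarrow>
    X_roll (- transpose T) (- p) (- Q) (v, (1, 0)) = X_roll T Q p (v, (1, 0))"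
  shows "(p + Q) \<bullet> A = 0 \<and> (\<exists>c. (T + transpose T) *v A = c *\<^sub>R A)"
proof (cases "A = 0")
  case False
  define v where "v = sgn A"
  have "v \<in> S2" using False by (simp add: v_def S2_def norm_sgn)
  then have v: "v \<bullet> v = 1" by (rule S2_inner_self)
  have one: "(1, 0) \<bullet> (1::real, 0::real^3) = 1" by (simp add: inner_Pair)
  obtain l l' where
    "dPhi v (1, 0) (X_roll T Q p (v, (1, 0))) = rho T Q p (Phi_rep v (1, 0)) + l *\<^sub>R Phi_rep v (1, 0)"
    "dPhi v (1, 0) (X_roll T Q p (v, (1, 0))) =
       rho (- transpose T) (- p) (- Q) (Phi_rep v (1, 0)) + l' *\<^sub>R Phi_rep v (1, 0)"
    using is_lift_X_roll[OF v one, of T Q p] is_lift_X_roll[OF v one, of "- transpose T" "- p" "- Q"]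
      conj_eq[OF \<open>v \<in> S2\<close>] unfolding is_lift_def by metis
  then have "rho T Q p (0, 2 *\<^sub>R v, 0) + l *\<^sub>R (0, 2 *\<^sub>R v, 0) =
      rho (- transpose T) (- p) (- Q) (0, 2 *\<^sub>R v, 0) + l' *\<^sub>R (0, 2 *\<^sub>R v, 0)"
    by (simp add: Phi_rep_one)
  then have "p \<bullet> v = - Q \<bullet> v"
    and "2 *\<^sub>R (T *v v + l *\<^sub>R v) = 2 *\<^sub>R (- transpose T *v v + l' *\<^sub>R v)"
    by (simp_all add: rho_pure_column matrix_vector_mult_scaleR scaleR_right_distrib mult.commute)
  then have "(p + Q) \<bullet> v = 0" and "(T + transpose T) *v v = (l' - l) *\<^sub>R v"
    unfolding scaleR_cancel_left
    by (simp_all add: inner_add_left matrix_vector_mult_add_rdistrib matrix_vector_mult_uminus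
        algebra_simps)
  moreover have "A = norm A *\<^sub>R v" using False by (simp add: v_def sgn_div_norm)
  ultimately show ?thesis
    by (metis inner_scaleR_right matrix_vector_mult_scaleR mult_zero_right scaleR_left_commute)
qed simp

theorem proposition8:
  fixes T :: "real^3^3" and Q p :: "real^3"
  assumes "trace T = 0"
  shows "descends_SO3 (X_roll T Q p) \<longleftrightarrow> (transpose T = - T \<and> Q = - p)"
proof
  assume "descends_SO3 (X_roll T Q p)"
  then have conj_eq: "\<And>v. v \<in> S2 \<Longrightarrow>
      X_roll (- transpose T) (- p) (- Q) (v, (1, 0)) = X_roll T Q p (v, (1, 0))"
    by (simp add: descends_SO3_X_roll_iff S3_def)
  note eigen = eigenvector_if_X_roll_conj_eq[OF conj_eq]
  obtain c where "T + transpose T = mat c"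
    using scalar_matrix_if_all_eigenvectors eigen by blast
  moreover have "trace (T + transpose T) = 0"
    using assms by (simp add: trace_add trace_transpose)
  ultimately have "T + transpose T = 0" by (simp add: trace_mat)
  moreover have "p + Q = 0" using eigen[of "p + Q"] by simp
  ultimately show "transpose T = - T \<and> Q = - p"
    by (metis add.commute eq_neg_iff_add_eq_0)
next
  assume "transpose T = - T \<and> Q = - p"
  then show "descends_SO3 (X_roll T Q p)" by (simp add: descends_SO3_X_roll_iff)
qed

end
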